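(* For every ternary cubic form $f$ whose Hessian $H(f)$ is defined (not identically zero), $R(f,H(f),-)=0$, i.e. $R(f,H(f),c)=0$ for every cubic form $c$.
   Context: $R$ is the alternating trilinear form on the space $\mathrm{Sym}^3\mathbb{C}^3$ of ternary cubic forms determined by $R(l^3,m^3,n^3)=(\det(l,m,n))^3$ for linear forms $l,m,n$, where $\det(l,m,n)$ is the determinant of their coefficient matrix. $H(f)=\det(\partial^2f/\partial x_i\partial x_j)$. *)

theory Defs
  imports Complex_Main
begin

text \<open>Ternary forms are represented by their coefficient functions:
  a monomial x^i y^j z^k is encoded as the triple (i,j,k), and a form is a map
  from monomials to complex coefficients (all but finitely many zero in practice).\<close>

type_synonym mon = "nat \<times> nat \<times> nat"
type_synonym form = "mon \<Rightarrow> complex"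

definition mdeg :: "mon \<Rightarrow> nat" where
  "mdeg m = (case m of (i, j, k) \<Rightarrow> i + j + k)"

definition is_form :: "nat \<Rightarrow> form \<Rightarrow> bool" where
  "is_form d f \<longleftrightarrow> (\<forall>m. mdeg m \<noteq> d \<longrightarrow> f m = 0)"

definition cut3 :: "form \<Rightarrow> form" where
  "cut3 f = (\<lambda>m. if mdeg m = 3 then f m else 0)"

definition padd :: "form \<Rightarrow> form \<Rightarrow> form" where
  "padd f g = (\<lambda>m. f m + g m)"

definition psub :: "form \<Rightarrow> form \<Rightarrow> form" where
  "psub f g = (\<lambda>m. f m - g m)"

definition pmul :: "form \<Rightarrow> form \<Rightarrow> form" where
  "pmul f g = (\<lambda>(i, j, k). \<Sum>a\<in>{0..i}. \<Sum>b\<in>{0..j}. \<Sum>c\<in>{0..k}.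
      f (a, b, c) * g (i - a, j - b, k - c))"

definition pderiv3 :: "nat \<Rightarrow> form \<Rightarrow> form" where
  "pderiv3 v f = (\<lambda>(i, j, k).
      if v = 0 then of_nat (i + 1) * f (i + 1, j, k)
      else if v = 1 then of_nat (j + 1) * f (i, j + 1, k)
      else of_nat (k + 1) * f (i, j, k + 1))"

definition hessian :: "form \<Rightarrow> form" where
  "hessian f = (let h = (\<lambda>a b. pderiv3 a (pderiv3 b f)) in
     psub (padd (padd (pmul (h 0 0) (pmul (h 1 1) (h 2 2)))
                       (pmul (h 0 1) (pmul (h 1 2) (h 2 0))))
                 (pmul (h 0 2) (pmul (h 1 0) (h 2 1))))
          (padd (padd (pmul (h 0 2) (pmul (h 1 1) (h 2 0)))
                       (pmul (h 0 1) (pmul (h 1 0) (h 2 2))))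
                 (pmul (h 0 0) (pmul (h 1 2) (h 2 1)))))"

type_synonym lin = "complex \<times> complex \<times> complex"

definition linform :: "lin \<Rightarrow> form" where
  "linform l = (case l of (a, b, c) \<Rightarrow>
     (\<lambda>m. if m = (1,0,0) then a else if m = (0,1,0) then b
          else if m = (0,0,1) then c else 0))"

definition cube :: "lin \<Rightarrow> form" where
  "cube l = pmul (linform l) (pmul (linform l) (linform l))"

definition det3 :: "lin \<Rightarrow> lin \<Rightarrow> lin \<Rightarrow> complex" where
  "det3 l m n = (case l of (a1, a2, a3) \<Rightarrow> case m of (b1, b2, b3) \<Rightarrow> case n of (c1, c2, c3) \<Rightarrow>
      a1 * b2 * c3 + a2 * b3 * c1 + a3 * b1 * c2
    - a3 * b2 * c1 - a2 * b1 * c3 - a1 * b3 * c2)"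

definition trilinear :: "(form \<Rightarrow> form \<Rightarrow> form \<Rightarrow> complex) \<Rightarrow> bool" where
  "trilinear T \<longleftrightarrow>
     (\<forall>a f f' g h. T (\<lambda>m. a * f m + f' m) g h = a * T f g h + T f' g h) \<and>
     (\<forall>a f g g' h. T f (\<lambda>m. a * g m + g' m) h = a * T f g h + T f g' h) \<and>
     (\<forall>a f g h h'. T f g (\<lambda>m. a * h m + h' m) = a * T f g h + T f g h')"

definition alternating3 :: "(form \<Rightarrow> form \<Rightarrow> form \<Rightarrow> complex) \<Rightarrow> bool" where
  "alternating3 T \<longleftrightarrow> (\<forall>f g. T f f g = 0 \<and> T f g f = 0 \<and> T g f f = 0)"

text \<open>The alternating trilinear form R on Sym^3 C^3 determined by
  R(l^3, m^3, n^3) = det(l,m,n)^3.  Forms are identified with their degree-3 parts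
  (R only depends on the degree-3 coefficients), making R unique.\<close>
definition R :: "form \<Rightarrow> form \<Rightarrow> form \<Rightarrow> complex" where
  "R = (THE T. trilinear T \<and> alternating3 T \<and>
          (\<forall>f g h. T f g h = T (cut3 f) (cut3 g) (cut3 h)) \<and>
          (\<forall>l m n. T (cube l) (cube m) (cube n) = (det3 l m n) ^ 3))"

end

theory Submission
  imports Defs
begin

text \<open>Write a cubic as f = sum F_ijk x_i x_j x_k with F symmetric. The contraction of three
  Levi-Civita symbols with the tensors of f, g and h is trilinear and alternating and sends
  (l^3, m^3, n^3) to det(l, m, n)^3; as every cubic is a linear combination of cubes of linear
  forms, these properties determine R, which is therefore this contraction. The claim
  R(f, H(f), c) = 0 becomes a polynomial identity in the coefficients of f and c, verified by
  expansion.\<close>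

lemma is_form_pmul:
  assumes "is_form d u" and "is_form e g"
  shows "is_form (d + e) (pmul u g)"
  unfolding is_form_def
proof (intro allI impI)
  fix m :: mon
  assume deg: "mdeg m \<noteq> d + e"
  obtain i j k where m: "m = (i, j, k)" by (cases m) auto
  have "u (a, b, c) * g (i - a, j - b, k - c) = 0" if "a \<le> i" "b \<le> j" "c \<le> k" for a b c
    using assms deg that unfolding is_form_def mdeg_def m by (cases "a + b + c = d") auto
  then show "pmul u g m = 0"
    unfolding m pmul_def prod.case by (intro sum.neutral ballI) auto
qed

lemma sum3_delta:
  "(\<Sum>a\<in>{0..i::nat}. \<Sum>b\<in>{0..j::nat}. \<Sum>c\<in>{0..k::nat}.
      if a = a0 \<and> b = b0 \<and> c = c0 then X a b c else (0::'a::comm_monoid_add)) =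
   (if a0 \<le> i \<and> b0 \<le> j \<and> c0 \<le> k then X a0 b0 c0 else 0)"
proof -
  have "(\<Sum>c\<in>{0..k}. if a = a0 \<and> b = b0 \<and> c = c0 then X a b c else 0) =
        (if a = a0 \<and> b = b0 \<and> c0 \<le> k then X a b c0 else 0)" for a b
    by (cases "a = a0 \<and> b = b0") (auto simp: sum.delta')
  moreover have "(\<Sum>b\<in>{0..j}. if a = a0 \<and> b = b0 \<and> c0 \<le> k then X a b c0 else 0) =
        (if a = a0 \<and> b0 \<le> j \<and> c0 \<le> k then X a b0 c0 else 0)" for a
    by (cases "a = a0 \<and> c0 \<le> k") (auto simp: sum.delta')
  ultimately show ?thesis
    by (cases "b0 \<le> j \<and> c0 \<le> k") (auto simp: sum.delta')
qed

lemma pmul_linform: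
  "pmul (linform (a, b, c)) g (i, j, k) =
     (if 0 < i then a * g (i - 1, j, k) else 0) + (if 0 < j then b * g (i, j - 1, k) else 0)
   + (if 0 < k then c * g (i, j, k - 1) else 0)"
proof -
  have split: "linform (a, b, c) (x, y, z) * w =
      (if x = 1 \<and> y = 0 \<and> z = 0 then a * w else 0)
    + (if x = 0 \<and> y = 1 \<and> z = 0 then b * w else 0)
    + (if x = 0 \<and> y = 0 \<and> z = 1 then c * w else 0)" for x y z w
    unfolding linform_def by auto
  show ?thesis
    unfolding pmul_def prod.case split sum.distrib sum3_delta by auto
qed

lemma is_form_1_eq_linform:
  assumes "is_form 1 u"
  shows "u = linform (u (1,0,0), u (0,1,0), u (0,0,1))"
proof
  fix m :: mon
  obtain i j k where m: "m = (i, j, k)" by (cases m) auto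
  show "u m = linform (u (1,0,0), u (0,1,0), u (0,0,1)) m"
    using assms unfolding m is_form_def mdeg_def linform_def
    by (cases i; cases j; cases k) auto
qed

lemma pmul_degree_1:
  assumes "is_form 1 u"
  shows "pmul u g (i, j, k) =
     (if 0 < i then u (1,0,0) * g (i - 1, j, k) else 0)
   + (if 0 < j then u (0,1,0) * g (i, j - 1, k) else 0)
   + (if 0 < k then u (0,0,1) * g (i, j, k - 1) else 0)"
  by (subst is_form_1_eq_linform[OF assms]) (rule pmul_linform)

lemma is_form_linform: "is_form 1 (linform l)"
  unfolding is_form_def linform_def mdeg_def by (auto split: prod.splits)

lemma is_form_cube: "is_form 3 (cube l)"
proof -
  have "is_form (1 + (1 + 1)) (cube l)"
    unfolding cube_def by (intro is_form_pmul is_form_linform)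
  then show ?thesis by (simp add: numeral_3_eq_3)
qed

lemma is_form_pderiv3: "is_form (Suc d) f \<Longrightarrow> is_form d (pderiv3 v f)"
  unfolding is_form_def pderiv3_def mdeg_def by auto

lemma cube_coeffs:
  "cube (a,b,c) (3,0,0) = a^3" "cube (a,b,c) (0,3,0) = b^3" "cube (a,b,c) (0,0,3) = c^3"
  "cube (a,b,c) (2,1,0) = 3*a^2*b" "cube (a,b,c) (2,0,1) = 3*a^2*c"
  "cube (a,b,c) (1,2,0) = 3*a*b^2" "cube (a,b,c) (0,2,1) = 3*b^2*c"
  "cube (a,b,c) (1,0,2) = 3*a*c^2" "cube (a,b,c) (0,1,2) = 3*b*c^2"
  "cube (a,b,c) (1,1,1) = 6*a*b*c"
  unfolding cube_def pmul_linform
  by (simp_all add: linform_def power2_eq_square power3_eq_cube algebra_simps)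

lemma mdeg_eq_3_cases:
  assumes "mdeg m = 3"
  shows "m \<in> {(3,0,0), (0,3,0), (0,0,3), (2,1,0), (2,0,1),
                (1,2,0), (0,2,1), (1,0,2), (0,1,2), (1,1,1)}"
proof -
  obtain i j k where m: "m = (i, j, k)" by (cases m) auto
  have k: "k = 3 - i - j" "i + j \<le> 3" using assms unfolding m mdeg_def by auto
  then have "i = 0 \<or> i = 1 \<or> i = 2 \<or> i = 3" "j = 0 \<or> j = 1 \<or> j = 2 \<or> j = 3" by auto
  then show ?thesis unfolding m k(1) using k(2) by (elim disjE) simp_all
qed

definition mon_of_indices :: "nat \<Rightarrow> nat \<Rightarrow> nat \<Rightarrow> mon" where
  "mon_of_indices i j k =
     ((if i = 0 then 1 else 0) + (if j = 0 then 1 else 0) + (if k = 0 then 1 else 0),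
      (if i = 1 then 1 else 0) + (if j = 1 then 1 else 0) + (if k = 1 then 1 else 0),
      (if i = 2 then 1 else 0) + (if j = 2 then 1 else 0) + (if k = 2 then 1 else 0))"

text \<open>The entry F_ijk (variables numbered 0, 1, 2) of the symmetric tensor of the cubic part
  of f; the monomial x^a y^b z^c arises from 3!/(a! b! c!) index triples.\<close>
definition sym_tensor :: "form \<Rightarrow> nat \<Rightarrow> nat \<Rightarrow> nat \<Rightarrow> complex" where
  "sym_tensor f i j k =
     (case mon_of_indices i j k of
        (a, b, c) \<Rightarrow> cut3 f (a, b, c) * of_nat (fact a * fact b * fact c) / 6)"

definition perms3 :: "(nat \<times> nat \<times> nat) set" where
  "perms3 = {(0,1,2), (1,2,0), (2,0,1), (0,2,1), (2,1,0), (1,0,2)}"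

definition levi_civita :: "nat \<times> nat \<times> nat \<Rightarrow> complex" where
  "levi_civita p =
     (if p \<in> {(0,1,2), (1,2,0), (2,0,1)} then 1
      else if p \<in> {(0,2,1), (2,1,0), (1,0,2)} then -1 else 0)"

definition R_tensor :: "form \<Rightarrow> form \<Rightarrow> form \<Rightarrow> complex" where
  "R_tensor f g h =
     (\<Sum>(p1, p2, p3)\<in>perms3. \<Sum>(q1, q2, q3)\<in>perms3. \<Sum>(r1, r2, r3)\<in>perms3.
        levi_civita (p1, p2, p3) * levi_civita (q1, q2, q3) * levi_civita (r1, r2, r3) *
        sym_tensor f p1 q1 r1 * sym_tensor g p2 q2 r2 * sym_tensor h p3 q3 r3)"

lemma sym_tensor_linear:
  "sym_tensor (\<lambda>m. a * f m + f' m) i j k = a * sym_tensor f i j k + sym_tensor f' i j k"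
  unfolding sym_tensor_def cut3_def by (simp add: algebra_simps split: prod.split)

lemma trilinear_R_tensor: "trilinear R_tensor"
  unfolding trilinear_def R_tensor_def sym_tensor_linear case_prod_beta
  by (simp add: algebra_simps sum.distrib sum_distrib_left)

lemma cut3_cut3: "cut3 (cut3 f) = cut3 f"
  unfolding cut3_def by auto

lemma R_tensor_cut3: "R_tensor f g h = R_tensor (cut3 f) (cut3 g) (cut3 h)"
  by (simp only: R_tensor_def sym_tensor_def cut3_cut3)

lemma R_tensor_explicit: "R_tensor f g h = (
    (-1) * f (0,0,3) * g (0,3,0) * h (3,0,0) +
    (1/3) * f (0,0,3) * g (1,2,0) * h (2,1,0) +
    (-1/3) * f (0,0,3) * g (2,1,0) * h (1,2,0) +
    (1) * f (0,0,3) * g (3,0,0) * h (0,3,0) +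
    (1/3) * f (0,1,2) * g (0,2,1) * h (3,0,0) +
    (-1/9) * f (0,1,2) * g (1,1,1) * h (2,1,0) +
    (-1/9) * f (0,1,2) * g (1,2,0) * h (2,0,1) +
    (1/9) * f (0,1,2) * g (2,0,1) * h (1,2,0) +
    (1/9) * f (0,1,2) * g (2,1,0) * h (1,1,1) +
    (-1/3) * f (0,1,2) * g (3,0,0) * h (0,2,1) +
    (-1/3) * f (0,2,1) * g (0,1,2) * h (3,0,0) +
    (1/9) * f (0,2,1) * g (1,0,2) * h (2,1,0) +
    (1/9) * f (0,2,1) * g (1,1,1) * h (2,0,1) +
    (-1/9) * f (0,2,1) * g (2,0,1) * h (1,1,1) +
    (-1/9) * f (0,2,1) * g (2,1,0) * h (1,0,2) +
    (1/3) * f (0,2,1) * g (3,0,0) * h (0,1,2) +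
    (1) * f (0,3,0) * g (0,0,3) * h (3,0,0) +
    (-1/3) * f (0,3,0) * g (1,0,2) * h (2,0,1) +
    (1/3) * f (0,3,0) * g (2,0,1) * h (1,0,2) +
    (-1) * f (0,3,0) * g (3,0,0) * h (0,0,3) +
    (-1/9) * f (1,0,2) * g (0,2,1) * h (2,1,0) +
    (1/3) * f (1,0,2) * g (0,3,0) * h (2,0,1) +
    (1/9) * f (1,0,2) * g (1,1,1) * h (1,2,0) +
    (-1/9) * f (1,0,2) * g (1,2,0) * h (1,1,1) +
    (-1/3) * f (1,0,2) * g (2,0,1) * h (0,3,0) +
    (1/9) * f (1,0,2) * g (2,1,0) * h (0,2,1) +
    (1/9) * f (1,1,1) * g (0,1,2) * h (2,1,0) +
    (-1/9) * f (1,1,1) * g (0,2,1) * h (2,0,1) +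
    (-1/9) * f (1,1,1) * g (1,0,2) * h (1,2,0) +
    (1/9) * f (1,1,1) * g (1,2,0) * h (1,0,2) +
    (1/9) * f (1,1,1) * g (2,0,1) * h (0,2,1) +
    (-1/9) * f (1,1,1) * g (2,1,0) * h (0,1,2) +
    (-1/3) * f (1,2,0) * g (0,0,3) * h (2,1,0) +
    (1/9) * f (1,2,0) * g (0,1,2) * h (2,0,1) +
    (1/9) * f (1,2,0) * g (1,0,2) * h (1,1,1) +
    (-1/9) * f (1,2,0) * g (1,1,1) * h (1,0,2) +
    (-1/9) * f (1,2,0) * g (2,0,1) * h (0,1,2) +
    (1/3) * f (1,2,0) * g (2,1,0) * h (0,0,3) +
    (-1/9) * f (2,0,1) * g (0,1,2) * h (1,2,0) +
    (1/9) * f (2,0,1) * g (0,2,1) * h (1,1,1) +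
    (-1/3) * f (2,0,1) * g (0,3,0) * h (1,0,2) +
    (1/3) * f (2,0,1) * g (1,0,2) * h (0,3,0) +
    (-1/9) * f (2,0,1) * g (1,1,1) * h (0,2,1) +
    (1/9) * f (2,0,1) * g (1,2,0) * h (0,1,2) +
    (1/3) * f (2,1,0) * g (0,0,3) * h (1,2,0) +
    (-1/9) * f (2,1,0) * g (0,1,2) * h (1,1,1) +
    (1/9) * f (2,1,0) * g (0,2,1) * h (1,0,2) +
    (-1/9) * f (2,1,0) * g (1,0,2) * h (0,2,1) +
    (1/9) * f (2,1,0) * g (1,1,1) * h (0,1,2) +
    (-1/3) * f (2,1,0) * g (1,2,0) * h (0,0,3) +
    (-1) * f (3,0,0) * g (0,0,3) * h (0,3,0) +
    (1/3) * f (3,0,0) * g (0,1,2) * h (0,2,1) +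
    (-1/3) * f (3,0,0) * g (0,2,1) * h (0,1,2) +
    (1) * f (3,0,0) * g (0,3,0) * h (0,0,3))"
  unfolding R_tensor_def perms3_def levi_civita_def sym_tensor_def mon_of_indices_def cut3_def
  by (simp add: mdeg_def, simp only: numeral_2_eq_2 numeral_3_eq_3 One_nat_def, algebra)

lemma alternating3_R_tensor: "alternating3 R_tensor"
  unfolding alternating3_def R_tensor_explicit by algebra

lemma R_tensor_cube: "R_tensor (cube l) (cube m) (cube n) = (det3 l m n) ^ 3"
proof -
  obtain a1 a2 a3 where l: "l = (a1, a2, a3)" by (cases l) auto
  obtain b1 b2 b3 where m: "m = (b1, b2, b3)" by (cases m) auto
  obtain c1 c2 c3 where n: "n = (c1, c2, c3)" by (cases n) auto
  show ?thesis
    unfolding l m n R_tensor_explicit cube_coeffs det3_def prod.case by algebra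
qed

definition form_linear :: "(form \<Rightarrow> complex) \<Rightarrow> bool" where
  "form_linear L \<longleftrightarrow> (\<forall>a f f'. L (\<lambda>m. a * f m + f' m) = a * L f + L f')"

lemma trilinear_form_linear:
  assumes "trilinear T"
  shows "form_linear (\<lambda>f. T f g h)" "form_linear (\<lambda>g. T f g h)" "form_linear (\<lambda>h. T f g h)"
  using assms unfolding trilinear_def form_linear_def by auto

lemma form_linear_zero:
  assumes "form_linear L"
  shows "L (\<lambda>_. 0) = 0"
  using assms[unfolded form_linear_def, rule_format, of "-1" "\<lambda>_. 0" "\<lambda>_. 0"] by simp

fun cube_comb :: "(complex \<times> lin) list \<Rightarrow> form" where
  "cube_comb [] = (\<lambda>_. 0)"
| "cube_comb ((a, l) # xs) = (\<lambda>m. a * cube l m + cube_comb xs m)"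

lemma form_linear_cube_comb:
  assumes "form_linear L"
  shows "L (cube_comb xs) = (\<Sum>(a, l)\<leftarrow>xs. a * L (cube l))"
  using assms
  by (induction xs rule: cube_comb.induct) (simp_all add: form_linear_zero form_linear_def)

lemma cube_comb_eq_0: "mdeg m \<noteq> 3 \<Longrightarrow> cube_comb xs m = 0"
  by (induction xs rule: cube_comb.induct) (auto simp: is_form_cube[unfolded is_form_def])

text \<open>Uses 6 x^2 y = (x + y)^3 - (x - y)^3 - 2 y^3, 6 x y^2 = (x + y)^3 + (x - y)^3 - 2 x^3
  and 24 x y z = (x + y + z)^3 - (x + y - z)^3 - (x - y + z)^3 + (x - y - z)^3.\<close>
definition cube_decomp :: "form \<Rightarrow> (complex \<times> lin) list" where
  "cube_decomp f = [(f (3,0,0), (1,0,0)), (f (0,3,0), (0,1,0)), (f (0,0,3), (0,0,1)),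
    (f (2,1,0) / 6, (1,1,0)), (- f (2,1,0) / 6, (1,-1,0)), (- f (2,1,0) / 3, (0,1,0)),
    (f (1,2,0) / 6, (1,1,0)), (f (1,2,0) / 6, (1,-1,0)), (- f (1,2,0) / 3, (1,0,0)),
    (f (2,0,1) / 6, (1,0,1)), (- f (2,0,1) / 6, (1,0,-1)), (- f (2,0,1) / 3, (0,0,1)),
    (f (1,0,2) / 6, (1,0,1)), (f (1,0,2) / 6, (1,0,-1)), (- f (1,0,2) / 3, (1,0,0)),
    (f (0,2,1) / 6, (0,1,1)), (- f (0,2,1) / 6, (0,1,-1)), (- f (0,2,1) / 3, (0,0,1)),
    (f (0,1,2) / 6, (0,1,1)), (f (0,1,2) / 6, (0,1,-1)), (- f (0,1,2) / 3, (0,1,0)),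
    (f (1,1,1) / 24, (1,1,1)), (- f (1,1,1) / 24, (1,1,-1)), (- f (1,1,1) / 24, (1,-1,1)),
    (f (1,1,1) / 24, (1,-1,-1))]"

lemma cut3_eq_cube_comb: "cut3 f = cube_comb (cube_decomp f)"
proof
  fix m :: mon
  show "cut3 f m = cube_comb (cube_decomp f) m"
  proof (cases "mdeg m = 3")
    case True
    then show ?thesis
      using mdeg_eq_3_cases[OF True]
      by (elim insertE emptyE;
          simp only: cut3_def cube_decomp_def cube_comb.simps cube_coeffs;
          simp add: field_simps mdeg_def)
  next
    case False
    then show ?thesis by (simp add: cut3_def cube_comb_eq_0)
  qed
qed

definition R_spec :: "(form \<Rightarrow> form \<Rightarrow> form \<Rightarrow> complex) \<Rightarrow> bool" where
  "R_spec T \<longleftrightarrow> trilinear T \<and> alternating3 T \<and>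
     (\<forall>f g h. T f g h = T (cut3 f) (cut3 g) (cut3 h)) \<and>
     (\<forall>l m n. T (cube l) (cube m) (cube n) = (det3 l m n) ^ 3)"

lemma R_spec_eq_sum_cubes:
  assumes "R_spec T"
  shows "T f g h = (\<Sum>(c, n)\<leftarrow>cube_decomp h. c * (\<Sum>(b, m)\<leftarrow>cube_decomp g. b *
                     (\<Sum>(a, l)\<leftarrow>cube_decomp f. a * (det3 l m n) ^ 3)))"
proof -
  have T: "trilinear T" and cut: "T f g h = T (cut3 f) (cut3 g) (cut3 h)"
    and cubes: "\<And>l m n. T (cube l) (cube m) (cube n) = (det3 l m n) ^ 3"
    using assms unfolding R_spec_def by auto
  show ?thesis
    unfolding cut cut3_eq_cube_comb
      form_linear_cube_comb[OF trilinear_form_linear(1)[OF T]]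
      form_linear_cube_comb[OF trilinear_form_linear(2)[OF T]]
      form_linear_cube_comb[OF trilinear_form_linear(3)[OF T]] cubes ..
qed

lemma R_spec_unique: "R_spec T \<Longrightarrow> R_spec T' \<Longrightarrow> T = T'"
  by (intro ext) (simp only: R_spec_eq_sum_cubes)

lemma R_spec_R_tensor: "R_spec R_tensor"
  unfolding R_spec_def
  using trilinear_R_tensor alternating3_R_tensor R_tensor_cut3 R_tensor_cube by blast

lemma R_eq_R_tensor: "R = R_tensor"
  unfolding R_def R_spec_def[symmetric]
  using R_spec_R_tensor R_spec_unique by blast

lemma R_hessian_eq_0:
  assumes "is_form 3 f"
  shows "R f (hessian f) c = 0"
proof -
  have second_derivative: "is_form 1 (pderiv3 a (pderiv3 b f))" for a b
    using assms by (intro is_form_pderiv3) (simp add: numeral_3_eq_3)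
  show ?thesis
    unfolding R_eq_R_tensor R_tensor_explicit
    by (simp add: hessian_def Let_def psub_def padd_def pmul_degree_1[OF second_derivative],
        simp add: pderiv3_def, simp only: numeral_2_eq_2 numeral_3_eq_3 One_nat_def, algebra)
qed

theorem mainTheorem10:
  fixes f c :: form
  assumes "is_form 3 f"
    and "hessian f \<noteq> (\<lambda>_. 0)"
    and "is_form 3 c"
  shows "R f (hessian f) c = 0"
  using assms(1) by (rule R_hessian_eq_0)

end
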